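(* If there is no uncertainty, then there exist optimal priority and quota mechanisms.
   Context: A single authority allocates a measure $q\in(0,1)$ of a homogeneous resource to a continuum of agents. Each agent has a type $\theta=(s,m)\in\Theta=[0,1]\times\mathcal{M}$, consisting of a score $s\in[0,1]$ and a group $m$ in a finite set $\mathcal{M}$. In state $\omega$, the measure of types is $F_\omega$ with density $f_\omega$; the authority's belief over states is $\Lambda$. An allocation $\mu:\Theta\to\{0,1\}$ is feasible if it allocates at most measure $q$; a mechanism maps each state to a feasible allocation. The score index is $\bar s_h(\mu,\omega)=\int_\Theta \mu(s,m)h(s)\,dF_\omega(s,m)$ for a continuous, strictly increasing $h:[0,1]\to\mathbb{R}_+$, and the measure of group-$m$ agents allocated is $x_m(\mu,\omega)=\int_0^1\mu(s,m)f_\omega(s,m)\,ds$. The authority's utility is $\xi(\bar s_h,x)=g\big(\bar s_h+\sum_{m\in\mathcal{M}}u_m(x_m)\big)$ with $g$ continuous and strictly increasing and each $u_m$ differentiable and concave; the authority always prefers to allocate the entire resource. "No uncertainty" means $\Lambda$ is a Dirac measure on a single state, and a mechanism is optimal without uncertainty if it maximizes the authority's utility. A priority mechanism, induced by a priority policy $P:\Theta\to[0,1]$, allocates the resource in order of priorities $P(s,m)$ until measure $q$ is allocated, with ties broken uniformly at random. A quota mechanism, induced by $(Q,D)$ with $Q=\{Q_m\}_{m\in\mathcal{M}}$ reserving measure $Q_m$ for group $m$ (residual $Q_R=q-\sum_m Q_m$ open to all) and a bijection $D:\mathcal{M}\cup\{R\}\to\{1,\dots,|\mathcal{M}|+1\}$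 giving the processing order, allocates $Q_{D^{-1}(k)}$ to agents of group $D^{-1}(k)$ in ascending order of $k$ and in descending order of score within each $k$; if there are insufficiently many agents of a group to fill its quota, the residual capacity is allocated in a final round in which all agents are eligible. *)

theory Defs
  imports "HOL-Analysis.Analysis"
begin

text \<open>Single state (no uncertainty): the type distribution is given by a density
  f s m on [0,1] for each group m (groups form a finite type 'm).
  An allocation is a function mu s m; only its values on s in [0,1] matter.\<close>

definition group_mass :: "(real \<Rightarrow> 'm \<Rightarrow> real) \<Rightarrow> (real \<Rightarrow> 'm \<Rightarrow> real) \<Rightarrow> 'm \<Rightarrow> real" where
  "group_mass f mu m = (LINT s:{0..1}|lborel. mu s m * f s m)"

definition total_mass :: "(real \<Rightarrow> 'm::finite \<Rightarrow> real) \<Rightarrow> (real \<Rightarrow> 'm \<Rightarrow> real) \<Rightarrow> real" where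
  "total_mass f mu = (\<Sum>m\<in>UNIV. group_mass f mu m)"

definition score_index :: "(real \<Rightarrow> real) \<Rightarrow> (real \<Rightarrow> 'm::finite \<Rightarrow> real) \<Rightarrow> (real \<Rightarrow> 'm \<Rightarrow> real) \<Rightarrow> real" where
  "score_index h f mu = (\<Sum>m\<in>UNIV. LINT s:{0..1}|lborel. mu s m * h s * f s m)"

definition utility :: "(real \<Rightarrow> real) \<Rightarrow> (real \<Rightarrow> real) \<Rightarrow> ('m::finite \<Rightarrow> real \<Rightarrow> real)
    \<Rightarrow> (real \<Rightarrow> 'm \<Rightarrow> real) \<Rightarrow> (real \<Rightarrow> 'm \<Rightarrow> real) \<Rightarrow> real" where
  "utility g h u f mu = g (score_index h f mu + (\<Sum>m\<in>UNIV. u m (group_mass f mu m)))"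

definition is_allocation :: "(real \<Rightarrow> 'm \<Rightarrow> real) \<Rightarrow> bool" where
  "is_allocation mu \<longleftrightarrow> (\<forall>s m. mu s m \<in> {0,1}) \<and> (\<forall>m. (\<lambda>s. mu s m) \<in> borel_measurable borel)"

definition feasible :: "(real \<Rightarrow> 'm::finite \<Rightarrow> real) \<Rightarrow> real \<Rightarrow> (real \<Rightarrow> 'm \<Rightarrow> real) \<Rightarrow> bool" where
  "feasible f q mu \<longleftrightarrow> is_allocation mu \<and> total_mass f mu \<le> q"

text \<open>Outcome of a mechanism in the (single) state is optimal: it is a (possibly
  fractional, i.e. expected, for random tie-breaking) feasible outcome whose utility is at
  least that of every feasible allocation.\<close>
definition optimal_outcome :: "(real \<Rightarrow> real) \<Rightarrow> (real \<Rightarrow> real) \<Rightarrow> ('m::finite \<Rightarrow> real \<Rightarrow> real)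
    \<Rightarrow> (real \<Rightarrow> 'm \<Rightarrow> real) \<Rightarrow> real \<Rightarrow> (real \<Rightarrow> 'm \<Rightarrow> real) \<Rightarrow> bool" where
  "optimal_outcome g h u f q mu \<longleftrightarrow>
     (\<forall>s m. 0 \<le> mu s m \<and> mu s m \<le> 1) \<and> (\<forall>m. (\<lambda>s. mu s m) \<in> borel_measurable borel) \<and>
     total_mass f mu \<le> q \<and>
     (\<forall>nu. feasible f q nu \<longrightarrow> utility g h u f nu \<le> utility g h u f mu)"

text \<open>Priority mechanism induced by P: agents with priority above a cutoff p are
  allocated, agents with priority exactly p receive the same fraction alpha (the
  probability under uniform random tie-breaking), until measure min(q, total) is allocated.\<close>
definition priority_outcome :: "(real \<Rightarrow> 'm::finite \<Rightarrow> real) \<Rightarrow> real \<Rightarrow> (real \<Rightarrow> 'm \<Rightarrow> real)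
    \<Rightarrow> (real \<Rightarrow> 'm \<Rightarrow> real) \<Rightarrow> bool" where
  "priority_outcome f q P mu \<longleftrightarrow>
     (\<exists>p alpha. 0 \<le> alpha \<and> alpha \<le> 1 \<and>
        (\<forall>s m. mu s m = (if p < P s m then 1 else if P s m = p then alpha else 0))) \<and>
     (\<forall>m. (\<lambda>s. mu s m) \<in> borel_measurable borel) \<and>
     total_mass f mu = min q (total_mass f (\<lambda>s m. 1))"

definition is_priority_policy :: "(real \<Rightarrow> 'm \<Rightarrow> real) \<Rightarrow> bool" where
  "is_priority_policy P \<longleftrightarrow> (\<forall>s m. 0 \<le> P s m \<and> P s m \<le> 1)"

text \<open>Quota mechanisms. The residual quota R is represented by None.\<close>
definition eligible :: "'m option \<Rightarrow> 'm set" where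
  "eligible k = (case k of None \<Rightarrow> UNIV | Some m \<Rightarrow> {m})"

definition quota_of :: "('m::finite \<Rightarrow> real) \<Rightarrow> real \<Rightarrow> 'm option \<Rightarrow> real" where
  "quota_of Q q k = (case k of None \<Rightarrow> q - (\<Sum>m\<in>UNIV. Q m) | Some m \<Rightarrow> Q m)"

definition is_quota_policy :: "('m::finite \<Rightarrow> real) \<Rightarrow> real \<Rightarrow> ('m option \<Rightarrow> nat) \<Rightarrow> bool" where
  "is_quota_policy Q q D \<longleftrightarrow> (\<forall>m. 0 \<le> Q m) \<and> (\<Sum>m\<in>UNIV. Q m) \<le> q \<and>
     bij_betw D UNIV {1..CARD('m) + 1}"

text \<open>One round: capacity c is allocated to not-yet-allocated agents whose group is in E,
  in descending order of score (i.e. above a score cutoff t), until c is used up or no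
  eligible agents remain.\<close>
definition round_step :: "(real \<Rightarrow> 'm::finite \<Rightarrow> real) \<Rightarrow> 'm set \<Rightarrow> real
    \<Rightarrow> (real \<Rightarrow> 'm \<Rightarrow> real) \<Rightarrow> (real \<Rightarrow> 'm \<Rightarrow> real) \<Rightarrow> bool" where
  "round_step f E c mu0 mu1 \<longleftrightarrow>
     (\<exists>t. \<forall>s m. mu1 s m = (if m \<in> E \<and> t < s then 1 else mu0 s m)) \<and>
     total_mass f mu1 - total_mass f mu0 =
       min c (total_mass f (\<lambda>s m. if m \<in> E then 1 - mu0 s m else 0))"

definition quota_outcome :: "(real \<Rightarrow> 'm::finite \<Rightarrow> real) \<Rightarrow> real \<Rightarrow> ('m \<Rightarrow> real)
    \<Rightarrow> ('m option \<Rightarrow> nat) \<Rightarrow> (real \<Rightarrow> 'm \<Rightarrow> real) \<Rightarrow> bool" where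
  "quota_outcome f q Q D mu \<longleftrightarrow>
     (\<exists>nu :: nat \<Rightarrow> real \<Rightarrow> 'm \<Rightarrow> real.
        nu 0 = (\<lambda>s m. 0) \<and>
        (\<forall>k\<in>{1..CARD('m) + 1}.
           round_step f (eligible (inv D k)) (quota_of Q q (inv D k)) (nu (k - 1)) (nu k)) \<and>
        round_step f UNIV (q - total_mass f (nu (CARD('m) + 1))) (nu (CARD('m) + 1)) mu)"

end

theory Submission
  imports Defs
begin

text \<open>By the bathtub principle, among
  allocations giving each group m a fixed mass, the score index is largest for the cutoff
  allocation admitting the agents of group m whose score exceeds a threshold t_m. So it suffices
  to optimise over the cube of cutoff vectors t, on which utility and allocated mass are
  continuous; a maximiser exists by compactness. Lowering its cutoffs until the resource is
  exhausted keeps it optimal, since the authority prefers to allocate more. The resulting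
  cutoff allocation is induced by the priority policy equal to the allocation itself, and by
  the quota mechanism that reserves to each group exactly its allocated mass and processes the
  residual quota last, where nothing remains to be allocated.\<close>

lemma set_borel_measurable_mult:
  fixes f g :: "'a \<Rightarrow> real"
  assumes "set_borel_measurable M A f" and "set_borel_measurable M A g"
  shows "set_borel_measurable M A (\<lambda>x. f x * g x)"
proof -
  have "(\<lambda>x. (indicator A x * f x) * (indicator A x * g x)) \<in> borel_measurable M"
    using assms by (simp add: set_borel_measurable_def)
  moreover have "(\<lambda>x. (indicator A x * f x) * (indicator A x * g x)) =
      (\<lambda>x. indicator A x *\<^sub>R (f x * g x))"
    by (simp add: fun_eq_iff split: split_indicator)
  ultimately show ?thesis
    unfolding set_borel_measurable_def by simp
qed

lemma set_integrable_bounded_mult: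
  fixes g k :: "'a \<Rightarrow> real"
  assumes g: "set_integrable M A g" and k: "set_borel_measurable M A k"
    and bound: "\<And>x. x \<in> A \<Longrightarrow> \<bar>k x\<bar> \<le> B"
  shows "set_integrable M A (\<lambda>x. k x * g x)"
proof (rule set_integrable_bound[OF set_integrable_mult_right[of B, OF g]])
  have "set_borel_measurable M A g"
    using g by (auto simp: set_integrable_def set_borel_measurable_def)
  then show "set_borel_measurable M A (\<lambda>x. k x * g x)"
    by (rule set_borel_measurable_mult[OF k])
  show "AE x in M. x \<in> A \<longrightarrow> norm (k x * g x) \<le> norm (B * g x)"
  proof (rule AE_I2, intro impI)
    fix x assume "x \<in> A"
    then have "\<bar>k x\<bar> \<le> \<bar>B\<bar>" using bound by force
    then show "norm (k x * g x) \<le> norm (B * g x)"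
      by (simp add: abs_mult mult_right_mono)
  qed
qed

lemma set_integrable_continuous_mult:
  fixes g h :: "real \<Rightarrow> real"
  assumes h: "continuous_on {a..b} h" and g: "set_integrable lborel {a..b} g"
  shows "set_integrable lborel {a..b} (\<lambda>s. h s * g s)"
proof -
  obtain B where "\<forall>x\<in>h ` {a..b}. \<bar>x\<bar> \<le> B"
    using compact_imp_bounded[OF compact_continuous_image[OF h compact_Icc]]
    by (auto simp: bounded_real)
  moreover have "set_borel_measurable lborel {a..b} h"
    unfolding set_borel_measurable_def
    using borel_measurable_continuous_on_indicator[OF _ h] by simp
  ultimately show ?thesis
    by (intro set_integrable_bounded_mult[OF g]) auto
qed

definition tail_integral :: "(real \<Rightarrow> real) \<Rightarrow> real \<Rightarrow> real" where
  "tail_integral g t = (LINT s:{0..1}|lborel. (if t < s then 1 else 0) * g s)"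

lemma set_integrable_tail:
  fixes g :: "real \<Rightarrow> real"
  assumes "set_integrable lborel {0..1} g"
  shows "set_integrable lborel {0..1} (\<lambda>s. (if t < s then 1 else 0) * g s)"
proof (rule set_integrable_bounded_mult[OF assms, where B = 1])
  show "set_borel_measurable lborel {0..1} (\<lambda>s::real. if t < s then 1 else 0 :: real)"
    unfolding set_borel_measurable_def by measurable
qed simp

lemma tail_integral_eq_diff:
  assumes g: "set_integrable lborel {0..1} g" and t: "t \<in> {0..1}"
  shows "tail_integral g t = (LINT s:{0..1}|lborel. g s) - integral {0..t} g"
proof -
  have g_t: "set_integrable lborel {0..t} g"
    by (rule set_integrable_subset[OF g]) (use t in auto)
  have "(\<lambda>s. indicator {0..1} s *\<^sub>R ((if t < s then 1 else 0) * g s)) =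
      (\<lambda>s. indicator {0..1} s *\<^sub>R g s - indicator {0..t} s *\<^sub>R g s)"
    using t by (auto simp: indicator_def fun_eq_iff)
  then have "tail_integral g t = (LINT s:{0..1}|lborel. g s) - (LINT s:{0..t}|lborel. g s)"
    unfolding tail_integral_def set_lebesgue_integral_def
    using g g_t by (simp add: set_integrable_def)
  then show ?thesis
    using set_borel_integral_eq_integral(2)[OF g_t] by simp
qed

lemma continuous_on_tail_integral:
  assumes g: "set_integrable lborel {0..1} g"
  shows "continuous_on {0..1} (tail_integral g)"
proof -
  have "continuous_on {0..1} (\<lambda>t. (LINT s:{0..1}|lborel. g s) - integral {0..t} g)"
    using indefinite_integral_continuous_1[OF set_borel_integral_eq_integral(1)[OF g]]
    by (intro continuous_intros)
  then show ?thesis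
    by (rule continuous_on_cong[THEN iffD1, OF refl, rotated]) (simp add: tail_integral_eq_diff[OF g])
qed

lemma tail_integral_0:
  assumes "set_integrable lborel {0..1} g"
  shows "tail_integral g 0 = (LINT s:{0..1}|lborel. g s)"
  using tail_integral_eq_diff[OF assms] by simp

lemma tail_integral_1: "tail_integral g 1 = 0"
proof -
  have "(\<lambda>s. indicator {0..1} s *\<^sub>R ((if 1 < s then 1 else 0) * g s)) = (\<lambda>s. 0)"
    by (auto simp: fun_eq_iff indicator_def)
  then show ?thesis
    unfolding tail_integral_def set_lebesgue_integral_def by simp
qed

lemma tail_integral_nonneg:
  assumes "\<And>s. s \<in> {0..1} \<Longrightarrow> 0 \<le> g s"
  shows "0 \<le> tail_integral g t"
  unfolding tail_integral_def set_lebesgue_integral_def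
  by (rule Bochner_Integration.integral_nonneg) (use assms in \<open>simp add: indicator_def\<close>)

lemma tail_integral_le:
  assumes g: "set_integrable lborel {0..1} g" and "\<And>s. s \<in> {0..1} \<Longrightarrow> 0 \<le> g s"
  shows "tail_integral g t \<le> (LINT s:{0..1}|lborel. g s)"
  unfolding tail_integral_def
  by (rule set_integral_mono[OF set_integrable_tail[OF g] g]) (use assms(2) in auto)

lemma weighted_integral_le_tail_integral:
  fixes g h w :: "real \<Rightarrow> real"
  assumes g: "set_integrable lborel {0..1} g" and g_nonneg: "\<And>s. s \<in> {0..1} \<Longrightarrow> 0 \<le> g s"
    and w: "set_borel_measurable lborel {0..1} w"
    and w_range: "\<And>s. s \<in> {0..1} \<Longrightarrow> 0 \<le> w s \<and> w s \<le> 1"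
    and h_cont: "continuous_on {0..1} h" and h_mono: "mono_on {0..1} h"
    and t: "t \<in> {0..1}"
    and same_mass: "(LINT s:{0..1}|lborel. w s * g s) = tail_integral g t"
  shows "(LINT s:{0..1}|lborel. w s * h s * g s) \<le> tail_integral (\<lambda>s. h s * g s) t"
proof -
  define c where "c s = (if t < s then 1 else 0 :: real)" for s
  have int_hg: "set_integrable lborel {0..1} (\<lambda>s. h s * g s)"
    by (rule set_integrable_continuous_mult[OF h_cont g])
  have int_whg: "set_integrable lborel {0..1} (\<lambda>s. w s * h s * g s)"
    using set_integrable_bounded_mult[OF int_hg w, of 1] w_range by (force simp: mult.assoc)
  have int_wg: "set_integrable lborel {0..1} (\<lambda>s. w s * g s)"
    using set_integrable_bounded_mult[OF g w, of 1] w_range by force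
  note int_chg = set_integrable_tail[OF int_hg, of t, folded c_def]
  note int_cg = set_integrable_tail[OF g, of t, folded c_def]
  have pointwise: "w s * h s * g s \<le> c s * (h s * g s) + h t * (w s * g s - c s * g s)"
    if s: "s \<in> {0..1}" for s
  proof -
    have "(w s - c s) * (h s - h t) \<le> 0"
      using w_range[OF s] mono_onD[OF h_mono, of t s] mono_onD[OF h_mono, of s t] s t
      by (cases "t < s") (auto simp: c_def mult_nonneg_nonpos mult_nonpos_nonneg)
    then have "(w s - c s) * (h s - h t) * g s \<le> 0"
      using g_nonneg[OF s] by (simp add: mult_nonpos_nonneg)
    then show ?thesis by (simp add: algebra_simps)
  qed
  have "(LINT s:{0..1}|lborel. w s * h s * g s)
      \<le> (LINT s:{0..1}|lborel. c s * (h s * g s) + h t * (w s * g s - c s * g s))"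
    using int_whg int_chg int_wg int_cg pointwise by (intro set_integral_mono) auto
  also have "\<dots> = tail_integral (\<lambda>s. h s * g s) t
      + h t * ((LINT s:{0..1}|lborel. w s * g s) - tail_integral g t)"
    using int_chg int_wg int_cg by (simp add: tail_integral_def c_def)
  finally show ?thesis
    using same_mass by simp
qed

lemma continuous_on_tail_integral_nth:
  assumes "set_integrable lborel {0..1} g"
  shows "continuous_on (cbox 0 1) (\<lambda>t::real^'n. tail_integral g (t $ i))"
  by (rule continuous_on_compose2[OF continuous_on_tail_integral[OF assms]])
    (auto intro: continuous_intros simp: mem_box_cart)

definition cutoff_allocation :: "real^'m \<Rightarrow> real \<Rightarrow> 'm \<Rightarrow> real" where
  "cutoff_allocation t s m = (if t $ m < s then 1 else 0)"

lemma group_mass_cutoff_allocation: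
  "group_mass f (cutoff_allocation t) m = tail_integral (\<lambda>s. f s m) (t $ m)"
  by (simp add: group_mass_def tail_integral_def cutoff_allocation_def)

lemma total_mass_cutoff_allocation:
  "total_mass f (cutoff_allocation t) = (\<Sum>m\<in>UNIV. tail_integral (\<lambda>s. f s m) (t $ m))"
  by (simp add: total_mass_def group_mass_cutoff_allocation)

lemma score_index_cutoff_allocation:
  "score_index h f (cutoff_allocation t) = (\<Sum>m\<in>UNIV. tail_integral (\<lambda>s. h s * f s m) (t $ m))"
  by (simp add: score_index_def tail_integral_def cutoff_allocation_def mult.assoc)

lemma group_mass_full: "group_mass f (\<lambda>s m. 1) m = (LINT s:{0..1}|lborel. f s m)"
  by (simp add: group_mass_def)

lemma is_allocation_cutoff_allocation: "is_allocation (cutoff_allocation t)"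
  unfolding is_allocation_def cutoff_allocation_def by simp

lemma priority_outcome_self:
  assumes "is_allocation mu" and "total_mass f mu = min q (total_mass f (\<lambda>s m. 1))"
  shows "is_priority_policy mu \<and> priority_outcome f q mu mu"
proof -
  have zero_one: "mu s m \<in> {0, 1}" for s m
    using assms(1) by (simp add: is_allocation_def)
  have "mu s m = (if 1/2 < mu s m then 1 else if mu s m = 1/2 then 0 else 0)"
    and "0 \<le> mu s m \<and> mu s m \<le> 1" for s m
    using zero_one[of s m] by auto
  then show ?thesis
    using assms unfolding is_priority_policy_def priority_outcome_def is_allocation_def
    by (intro conjI exI[of _ "1/2"] exI[of _ 0]) auto
qed

lemma optimal_outcomeI:
  assumes "feasible f q mu" and "\<And>nu. feasible f q nu \<Longrightarrow> utility g h u f nu \<le> utility g h u f mu"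
  shows "optimal_outcome g h u f q mu"
proof -
  have zero_one: "mu s m \<in> {0, 1}" for s m
    using assms(1) by (simp add: feasible_def is_allocation_def)
  have "0 \<le> mu s m \<and> mu s m \<le> 1" for s m
    using zero_one[of s m] by auto
  then show ?thesis
    using assms unfolding optimal_outcome_def feasible_def is_allocation_def by auto
qed

lemma ex_bij_residual_last:
  "\<exists>D :: 'm::finite option \<Rightarrow> nat. bij_betw D UNIV {1..CARD('m) + 1} \<and> D None = CARD('m) + 1"
proof -
  obtain e :: "'m \<Rightarrow> nat" where e: "bij_betw e UNIV {0..<CARD('m)}"
    using ex_bij_betw_finite_nat[of "UNIV :: 'm set"] by auto
  have e_less: "e m < CARD('m)" for m
    using e by (auto simp: bij_betw_def)
  define D where "D = case_option (CARD('m) + 1) (\<lambda>m. Suc (e m))"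
  have "inj D"
    using e e_less unfolding D_def bij_betw_def inj_def
    by (auto split: option.splits) (metis less_irrefl)+
  moreover have "range D = {1..CARD('m) + 1}"
  proof -
    have "range D = insert (CARD('m) + 1) (Suc ` e ` UNIV)"
      by (auto simp: D_def UNIV_option_conv image_image)
    also have "\<dots> = {1..CARD('m) + 1}"
      using e by (auto simp: bij_betw_def image_Suc_atLeastLessThan atLeastLessThanSuc_atLeastAtMost)
    finally show ?thesis .
  qed
  ultimately show ?thesis
    by (intro exI[of _ D]) (simp add: bij_betw_def D_def)
qed

lemma round_step_single_group:
  assumes empty: "\<And>s. mu0 s m0 = 0"
    and mu1: "\<And>s m. mu1 s m = (if m = m0 \<and> t < s then 1 else mu0 s m)"
    and bounded: "group_mass f mu1 m0 \<le> group_mass f (\<lambda>s m. 1) m0"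
  shows "round_step f {m0} (group_mass f mu1 m0) mu0 mu1"
  unfolding round_step_def
proof (intro conjI exI allI)
  show "mu1 s m = (if m \<in> {m0} \<and> t < s then 1 else mu0 s m)" for s m
    by (simp add: mu1)
  have "group_mass f mu1 m - group_mass f mu0 m = (if m = m0 then group_mass f mu1 m0 else 0)" for m
    by (auto simp: group_mass_def mu1 empty)
  then have "total_mass f mu1 - total_mass f mu0 = group_mass f mu1 m0"
    by (simp add: total_mass_def flip: sum_subtractf)
  moreover have "group_mass f (\<lambda>s m. if m \<in> {m0} then 1 - mu0 s m else 0) m =
      (if m = m0 then group_mass f (\<lambda>s m. 1) m0 else 0)" for m
    by (simp add: group_mass_def empty)
  then have "total_mass f (\<lambda>s m. if m \<in> {m0} then 1 - mu0 s m else 0) =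
      group_mass f (\<lambda>s m. 1) m0"
    by (simp add: total_mass_def)
  ultimately show "total_mass f mu1 - total_mass f mu0 =
      min (group_mass f mu1 m0) (total_mass f (\<lambda>s m. if m \<in> {m0} then 1 - mu0 s m else 0))"
    using bounded by simp
qed

locale type_distribution =
  fixes f :: "real \<Rightarrow> 'm::finite \<Rightarrow> real"
  assumes f_nonneg: "\<And>s m. s \<in> {0..1} \<Longrightarrow> 0 \<le> f s m"
    and f_integrable: "\<And>m. set_integrable lborel {0..1} (\<lambda>s. f s m)"
begin

lemma group_mass_cutoff_allocation_bounds:
  "0 \<le> group_mass f (cutoff_allocation t) m"
  "group_mass f (cutoff_allocation t) m \<le> group_mass f (\<lambda>s m. 1) m"
  unfolding group_mass_cutoff_allocation group_mass_full
  using tail_integral_nonneg tail_integral_le[OF f_integrable] f_nonneg by auto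

lemma total_mass_cutoff_allocation_le:
  "total_mass f (cutoff_allocation t) \<le> total_mass f (\<lambda>s m. 1)"
  unfolding total_mass_def by (intro sum_mono group_mass_cutoff_allocation_bounds)

lemma continuous_on_total_mass_cutoff_allocation:
  "continuous_on (cbox 0 1) (\<lambda>t. total_mass f (cutoff_allocation t))"
  unfolding total_mass_cutoff_allocation
  by (intro continuous_on_sum continuous_on_tail_integral_nth f_integrable)

lemma total_mass_cutoff_allocation_1: "total_mass f (cutoff_allocation 1) = 0"
  by (simp add: total_mass_cutoff_allocation tail_integral_1)

lemma total_mass_cutoff_allocation_0:
  "total_mass f (cutoff_allocation 0) = total_mass f (\<lambda>s m. 1)"
  unfolding total_mass_def group_mass_cutoff_allocation group_mass_full
  by (simp add: tail_integral_0[OF f_integrable])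

lemma exists_lower_cutoff_allocation_exhausting:
  assumes ts: "ts \<in> cbox 0 1" and mass: "total_mass f (cutoff_allocation ts) \<le> q"
  obtains t where "t \<in> cbox 0 1" "\<And>m. t $ m \<le> ts $ m"
    "total_mass f (cutoff_allocation t) = min q (total_mass f (\<lambda>s m. 1))"
proof -
  define path where "path l = (1 - l) *\<^sub>R ts" for l :: real
  have path_cube: "path l \<in> cbox 0 1" if "l \<in> {0..1}" for l
    using ts that by (auto simp: path_def mem_box_cart mult_le_one)
  have "continuous_on {0..1} (\<lambda>l. total_mass f (cutoff_allocation (path l)))"
    by (rule continuous_on_compose2[OF continuous_on_total_mass_cutoff_allocation])
      (auto simp: path_def intro!: continuous_intros path_cube[unfolded path_def])
  then obtain l where l: "l \<in> {0..1}"
      "total_mass f (cutoff_allocation (path l)) = min q (total_mass f (\<lambda>s m. 1))"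
    using IVT'[of "\<lambda>l. total_mass f (cutoff_allocation (path l))" 0
        "min q (total_mass f (\<lambda>s m. 1))" 1]
      mass total_mass_cutoff_allocation_le[of ts] total_mass_cutoff_allocation_0
    by (auto simp: path_def)
  moreover have "path l $ m \<le> ts $ m" for m
    using ts l by (auto simp: path_def mem_box_cart mult_left_le_one_le)
  ultimately show ?thesis
    using that path_cube by blast
qed

lemma round_step_residual_cutoff_allocation:
  assumes t: "t \<in> cbox 0 1"
    and mass: "total_mass f (cutoff_allocation t) = min q (total_mass f (\<lambda>s m. 1))"
  shows "round_step f UNIV (q - total_mass f (cutoff_allocation t))
    (cutoff_allocation t) (cutoff_allocation t)"
  unfolding round_step_def
proof (intro conjI exI allI)
  show "cutoff_allocation t s m = (if m \<in> UNIV \<and> 1 < s then 1 else cutoff_allocation t s m)" for s m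
    using t by (auto simp: cutoff_allocation_def mem_box_cart dest: spec[of _ m])
  have "group_mass f (\<lambda>s m. if m \<in> UNIV then 1 - cutoff_allocation t s m else 0) m =
      group_mass f (\<lambda>s m. 1) m - group_mass f (cutoff_allocation t) m" for m
    using set_integral_diff(2)[OF f_integrable set_integrable_tail[OF f_integrable]]
    by (simp add: group_mass_def cutoff_allocation_def left_diff_distrib)
  then have "total_mass f (\<lambda>s m. if m \<in> UNIV then 1 - cutoff_allocation t s m else 0) =
      total_mass f (\<lambda>s m. 1) - total_mass f (cutoff_allocation t)"
    by (simp add: total_mass_def sum_subtractf)
  then show "total_mass f (cutoff_allocation t) - total_mass f (cutoff_allocation t) =
      min (q - total_mass f (cutoff_allocation t))
        (total_mass f (\<lambda>s m. if m \<in> UNIV then 1 - cutoff_allocation t s m else 0))"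
    using mass by linarith
qed

lemma is_quota_policy_cutoff_allocation:
  assumes "total_mass f (cutoff_allocation t) \<le> q" and "bij_betw D UNIV {1..CARD('m) + 1}"
  shows "is_quota_policy (group_mass f (cutoff_allocation t)) q D"
  using assms group_mass_cutoff_allocation_bounds(1)
  unfolding is_quota_policy_def total_mass_def by blast

lemma quota_outcome_cutoff_allocation:
  assumes t: "t \<in> cbox 0 1"
    and mass: "total_mass f (cutoff_allocation t) = min q (total_mass f (\<lambda>s m. 1))"
    and D: "bij_betw D UNIV {1..CARD('m) + 1}" and D_None: "D None = CARD('m) + 1"
  shows "quota_outcome f q (group_mass f (cutoff_allocation t)) D (cutoff_allocation t)"
proof -
  define nu where "nu k s m = (if D (Some m) \<le> k then cutoff_allocation t s m else 0)" for k s m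
  have D_inj: "inj D"
    using D by (simp add: bij_betw_def)
  have D_Some: "1 \<le> D (Some m) \<and> D (Some m) \<le> CARD('m)" for m
  proof -
    have "D (Some m) \<in> {1..CARD('m) + 1}" "D (Some m) \<noteq> D None"
      using D by (auto simp: bij_betw_def inj_eq)
    then show ?thesis using D_None by auto
  qed
  have nu_0: "nu 0 = (\<lambda>s m. 0)"
  proof (intro ext)
    show "nu 0 s m = 0" for s m
      using D_Some[of m] by (simp add: nu_def)
  qed
  have nu_full: "nu k = cutoff_allocation t" if "CARD('m) \<le> k" for k
    using D_Some that by (auto simp: nu_def fun_eq_iff intro: order_trans)
  have residual: "round_step f UNIV (q - total_mass f (cutoff_allocation t))
      (cutoff_allocation t) (cutoff_allocation t)"
    by (rule round_step_residual_cutoff_allocation[OF t mass])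
  have round: "round_step f (eligible (inv D k))
      (quota_of (group_mass f (cutoff_allocation t)) q (inv D k)) (nu (k - 1)) (nu k)"
    if k: "k \<in> {1..CARD('m) + 1}" for k
  proof (cases "k = CARD('m) + 1")
    case True
    then have "inv D k = None"
      using D_None by (simp add: inv_f_eq[OF D_inj])
    then show ?thesis
      using residual True nu_full[of k] nu_full[of "k - 1"]
      by (simp add: eligible_def quota_of_def total_mass_def)
  next
    case False
    have "k \<in> range D"
      using D k by (simp add: bij_betw_def)
    then obtain x where "D x = k" by blast
    with False D_None obtain m0 where m0: "D (Some m0) = k"
      by (cases x) auto
    then have "inv D k = Some m0"
      by (simp add: inv_f_eq[OF D_inj])
    moreover have "group_mass f (nu k) m0 = group_mass f (cutoff_allocation t) m0"
      using m0 by (simp add: group_mass_def nu_def)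
    moreover have "round_step f {m0} (group_mass f (nu k) m0) (nu (k - 1)) (nu k)"
    proof (rule round_step_single_group)
      show "nu (k - 1) s m0 = 0" for s
        using m0 k by (auto simp: nu_def)
      show "nu k s m = (if m = m0 \<and> t $ m0 < s then 1 else nu (k - 1) s m)" for s m
      proof (cases "m = m0")
        case False
        have "D (Some m) \<noteq> k"
          using False by (simp add: m0[symmetric] inj_eq[OF D_inj])
        then show ?thesis
          using False by (auto simp: nu_def)
      qed (use m0 k in \<open>simp add: nu_def cutoff_allocation_def\<close>)
      show "group_mass f (nu k) m0 \<le> group_mass f (\<lambda>s m. 1) m0"
        using m0 group_mass_cutoff_allocation_bounds(2) by (simp add: group_mass_def nu_def)
    qed
    ultimately show ?thesis
      by (simp add: eligible_def quota_of_def)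
  qed
  show ?thesis
    unfolding quota_outcome_def
    using nu_0 round residual nu_full[of "CARD('m) + 1"] by (intro exI[of _ nu]) auto
qed

end

locale scored_type_distribution = type_distribution f for f :: "real \<Rightarrow> 'm::finite \<Rightarrow> real" +
  fixes h :: "real \<Rightarrow> real"
  assumes h_cont: "continuous_on {0..1} h" and h_mono: "mono_on {0..1} h"
begin

lemma cutoff_allocation_dominates:
  fixes nu :: "real \<Rightarrow> 'm \<Rightarrow> real"
  assumes nu_meas: "\<And>m. (\<lambda>s. nu s m) \<in> borel_measurable borel"
    and nu_range: "\<And>s m. 0 \<le> nu s m \<and> nu s m \<le> 1"
  obtains t where "t \<in> cbox 0 1" "\<And>m. group_mass f (cutoff_allocation t) m = group_mass f nu m"
    "score_index h f nu \<le> score_index h f (cutoff_allocation t)"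
proof -
  have nu_set_meas: "set_borel_measurable lborel {0..1} (\<lambda>s. nu s m)" for m
    using nu_meas unfolding set_borel_measurable_def by simp
  have "\<exists>\<tau>. \<tau> \<in> {0..1} \<and> tail_integral (\<lambda>s. f s m) \<tau> = group_mass f nu m" for m
  proof -
    have int: "set_integrable lborel {0..1} (\<lambda>s. nu s m * f s m)"
      using set_integrable_bounded_mult[OF f_integrable[of m] nu_set_meas[of m], of 1] nu_range by force
    have "0 \<le> group_mass f nu m"
      unfolding group_mass_def set_lebesgue_integral_def
      by (rule Bochner_Integration.integral_nonneg)
        (use nu_range f_nonneg in \<open>simp add: indicator_def\<close>)
    moreover have "group_mass f nu m \<le> (LINT s:{0..1}|lborel. f s m)"
      unfolding group_mass_def
      by (rule set_integral_mono[OF int f_integrable])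
        (use nu_range f_nonneg in \<open>simp add: mult_left_le_one_le\<close>)
    ultimately show ?thesis
      using IVT2'[of "tail_integral (\<lambda>s. f s m)" 1 "group_mass f nu m" 0]
        continuous_on_tail_integral[OF f_integrable] tail_integral_0[OF f_integrable] tail_integral_1
      by auto
  qed
  then obtain \<tau> where
    \<tau>: "\<And>m. \<tau> m \<in> {0..1} \<and> tail_integral (\<lambda>s. f s m) (\<tau> m) = group_mass f nu m"
    by metis
  define t where "t = (\<chi> m. \<tau> m)"
  have "t \<in> cbox 0 1"
    using \<tau> by (simp add: t_def mem_box_cart)
  moreover have mass: "group_mass f (cutoff_allocation t) m = group_mass f nu m" for m
    using \<tau> by (simp add: t_def group_mass_cutoff_allocation)
  moreover have "score_index h f nu \<le> score_index h f (cutoff_allocation t)"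
    unfolding score_index_cutoff_allocation unfolding score_index_def
  proof (rule sum_mono)
    fix m
    show "(LINT s:{0..1}|lborel. nu s m * h s * f s m) \<le> tail_integral (\<lambda>s. h s * f s m) (t $ m)"
      using \<tau> mass[of m] nu_range
      by (intro weighted_integral_le_tail_integral[OF f_integrable f_nonneg nu_set_meas _ h_cont h_mono])
        (auto simp: group_mass_def t_def)
  qed
  ultimately show ?thesis
    using that by blast
qed

lemma feasible_utility_le_cutoff_allocation:
  assumes g: "mono g" and nu: "feasible f q nu"
  obtains t where "t \<in> cbox 0 1" "total_mass f (cutoff_allocation t) \<le> q"
    "utility g h u f nu \<le> utility g h u f (cutoff_allocation t)"
proof -
  have "nu s m \<in> {0, 1}" and "(\<lambda>s. nu s m) \<in> borel_measurable borel" for s m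
    using nu by (simp_all add: feasible_def is_allocation_def)
  then obtain t where t: "t \<in> cbox 0 1"
    and mass: "\<And>m. group_mass f (cutoff_allocation t) m = group_mass f nu m"
    and score: "score_index h f nu \<le> score_index h f (cutoff_allocation t)"
    using cutoff_allocation_dominates by (metis insert_iff order.refl singletonD zero_le_one)
  have "total_mass f (cutoff_allocation t) \<le> q"
    using nu mass by (simp add: feasible_def total_mass_def)
  moreover have "utility g h u f nu \<le> utility g h u f (cutoff_allocation t)"
    unfolding utility_def mass using score by (intro monoD[OF g]) simp
  ultimately show ?thesis
    using that t by blast
qed

lemma continuous_on_utility_cutoff_allocation:
  assumes g: "continuous_on UNIV g" and u: "\<And>m. continuous_on UNIV (u m)"
  shows "continuous_on (cbox 0 1) (\<lambda>t. utility g h u f (cutoff_allocation t))"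
proof -
  have score: "set_integrable lborel {0..1} (\<lambda>s. h s * f s m)" for m
    by (rule set_integrable_continuous_mult[OF h_cont f_integrable])
  have "continuous_on (cbox 0 1) (\<lambda>t::real^'m. u m (tail_integral (\<lambda>s. f s m) (t $ m)))" for m
    by (rule continuous_on_compose2[OF u continuous_on_tail_integral_nth[OF f_integrable]]) auto
  then show ?thesis
    unfolding utility_def score_index_cutoff_allocation group_mass_cutoff_allocation
    by (intro continuous_on_compose2[OF g] continuous_on_add continuous_on_sum
        continuous_on_tail_integral_nth score) auto
qed

lemma exists_best_cutoff_allocation:
  assumes q: "0 \<le> q" and g: "continuous_on UNIV g" and u: "\<And>m. continuous_on UNIV (u m)"
  obtains ts where "ts \<in> cbox 0 1" "total_mass f (cutoff_allocation ts) \<le> q"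
    "\<And>t. t \<in> cbox 0 1 \<Longrightarrow> total_mass f (cutoff_allocation t) \<le> q \<Longrightarrow>
      utility g h u f (cutoff_allocation t) \<le> utility g h u f (cutoff_allocation ts)"
proof -
  define K where "K = {t \<in> cbox 0 1. total_mass f (cutoff_allocation t) \<le> q}"
  have "closed K"
    unfolding K_def
    by (rule continuous_on_closed_Collect_le[OF continuous_on_total_mass_cutoff_allocation
          continuous_on_const closed_cbox])
  moreover have "K = cbox 0 1 \<inter> K"
    by (auto simp: K_def)
  ultimately have "compact K"
    by (metis compact_Int_closed compact_cbox)
  moreover have "1 \<in> K"
    using q by (simp add: K_def total_mass_cutoff_allocation_1 mem_box_cart)
  moreover have "continuous_on K (\<lambda>t. utility g h u f (cutoff_allocation t))"
    by (rule continuous_on_subset[OF continuous_on_utility_cutoff_allocation[OF g u]])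
      (auto simp: K_def)
  ultimately obtain ts where "ts \<in> K" "\<And>t. t \<in> K \<Longrightarrow>
      utility g h u f (cutoff_allocation t) \<le> utility g h u f (cutoff_allocation ts)"
    using continuous_attains_sup[of K "\<lambda>t. utility g h u f (cutoff_allocation t)"] by blast
  then show ?thesis
    using that unfolding K_def by blast
qed

lemma exists_optimal_cutoff_allocation:
  assumes q: "0 \<le> q" and g: "continuous_on UNIV g" "mono g"
    and u: "\<And>m. continuous_on UNIV (u m)"
  obtains ts where "ts \<in> cbox 0 1" "total_mass f (cutoff_allocation ts) \<le> q"
    "\<And>nu. feasible f q nu \<Longrightarrow> utility g h u f nu \<le> utility g h u f (cutoff_allocation ts)"
proof -
  obtain ts where ts: "ts \<in> cbox 0 1" "total_mass f (cutoff_allocation ts) \<le> q"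
    and ts_max: "\<And>t. t \<in> cbox 0 1 \<Longrightarrow> total_mass f (cutoff_allocation t) \<le> q \<Longrightarrow>
      utility g h u f (cutoff_allocation t) \<le> utility g h u f (cutoff_allocation ts)"
    using exists_best_cutoff_allocation[where u = u, OF q g(1) u] by blast
  have "utility g h u f nu \<le> utility g h u f (cutoff_allocation ts)" if nu: "feasible f q nu" for nu
  proof -
    obtain t where "t \<in> cbox 0 1" "total_mass f (cutoff_allocation t) \<le> q"
      and "utility g h u f nu \<le> utility g h u f (cutoff_allocation t)"
      using feasible_utility_le_cutoff_allocation[OF g(2) nu] by blast
    then show ?thesis
      using ts_max by (meson order_trans)
  qed
  then show ?thesis
    using that ts by blast
qed

end

theorem proposition4:
  fixes f :: "real \<Rightarrow> 'm::finite \<Rightarrow> real"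
    and q :: real
    and h :: "real \<Rightarrow> real"
    and g :: "real \<Rightarrow> real"
    and u :: "'m \<Rightarrow> real \<Rightarrow> real"
  assumes q: "0 < q" "q < 1"
    and f_nonneg: "\<And>s m. s \<in> {0..1} \<Longrightarrow> 0 \<le> f s m"
    and f_int: "\<And>m. set_integrable lborel {0..1} (\<lambda>s. f s m)"
    and h_cont: "continuous_on {0..1} h"
    and h_mono: "strict_mono_on {0..1} h"
    and h_nonneg: "\<And>s. s \<in> {0..1} \<Longrightarrow> 0 \<le> h s"
    and g_cont: "continuous_on UNIV g"
    and g_mono: "strict_mono g"
    and u_diff: "\<And>m x. u m differentiable (at x)"
    and u_concave: "\<And>m. concave_on UNIV (u m)"
    and prefers_full: "\<And>mu nu. feasible f q mu \<Longrightarrow> feasible f q nu \<Longrightarrow>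
                         (\<forall>s m. mu s m \<le> nu s m) \<Longrightarrow> utility g h u f mu \<le> utility g h u f nu"
  shows "(\<exists>P mu. is_priority_policy P \<and> priority_outcome f q P mu \<and> optimal_outcome g h u f q mu)
       \<and> (\<exists>Q D mu. is_quota_policy Q q D \<and> quota_outcome f q Q D mu \<and> optimal_outcome g h u f q mu)"
proof -
  interpret scored_type_distribution f h
    using f_nonneg f_int h_cont strict_mono_on_imp_mono_on[OF h_mono] by unfold_locales
  have u_cont: "continuous_on UNIV (u m)" for m
    by (rule continuous_at_imp_continuous_on) (use u_diff differentiable_imp_continuous_within in blast)
  obtain ts where ts: "ts \<in> cbox 0 1" "total_mass f (cutoff_allocation ts) \<le> q"
    and ts_optimal: "\<And>nu. feasible f q nu \<Longrightarrow>
      utility g h u f nu \<le> utility g h u f (cutoff_allocation ts)"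
    using exists_optimal_cutoff_allocation[where u = u, OF less_imp_le[OF q(1)] g_cont
        strict_mono_mono[OF g_mono] u_cont] by blast
  obtain t where t: "t \<in> cbox 0 1" "\<And>m. t $ m \<le> ts $ m"
    and mass: "total_mass f (cutoff_allocation t) = min q (total_mass f (\<lambda>s m. 1))"
    using exists_lower_cutoff_allocation_exhausting[OF ts] by blast
  have feasible_ts: "feasible f q (cutoff_allocation ts)"
    and feasible_t: "feasible f q (cutoff_allocation t)"
    using ts mass by (simp_all add: feasible_def is_allocation_cutoff_allocation)
  have "\<forall>s m. cutoff_allocation ts s m \<le> cutoff_allocation t s m"
    using t(2) by (auto simp: cutoff_allocation_def intro: le_less_trans)
  then have optimal: "optimal_outcome g h u f q (cutoff_allocation t)"
    using ts_optimal prefers_full[OF feasible_ts feasible_t]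
    by (intro optimal_outcomeI[OF feasible_t]) (meson order_trans)
  obtain D :: "'m option \<Rightarrow> nat"
    where D: "bij_betw D UNIV {1..CARD('m) + 1}" "D None = CARD('m) + 1"
    using ex_bij_residual_last by blast
  show ?thesis
    using optimal priority_outcome_self[OF is_allocation_cutoff_allocation mass]
      is_quota_policy_cutoff_allocation[OF _ D(1)] quota_outcome_cutoff_allocation[OF t(1) mass D]
      mass by (metis min.cobounded1)
qed

end
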